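(* Let $G$ be the line graph of some graph, where $G$ has arbitrary infinite order. Then for every assignment of lists of size $2$ to the vertices of $G$, $G$ admits a majority vertex-coloring from these lists.
   Context: Given lists $L(x)$ for the vertices $x$ of $G$, a vertex-coloring from the lists is a map $c$ with $c(x)\in L(x)$ for each vertex $x$. It is a majority vertex-coloring if for every vertex $x$, the cardinality of the set of neighbors of $x$ having color $c(x)$ is at most the cardinality of the set of neighbors of $x$ having a color different from $c(x)$. *)

theory Defs
  imports Main
begin

text \<open>A simple graph H (possibly infinite) is given by its edge set E, a set of
  2-element subsets of the vertex type.\<close>

definition simple_edges :: "'a set set \<Rightarrow> bool" where
  "simple_edges E \<longleftrightarrow> (\<forall>e\<in>E. card e = 2)"

definition line_adj :: "'a set set \<Rightarrow> 'a set \<Rightarrow> 'a set \<Rightarrow> bool" where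
  "line_adj E e f \<longleftrightarrow> e \<in> E \<and> f \<in> E \<and> e \<noteq> f \<and> e \<inter> f \<noteq> {}"

definition nbhd :: "'v set \<Rightarrow> ('v \<Rightarrow> 'v \<Rightarrow> bool) \<Rightarrow> 'v \<Rightarrow> 'v set" where
  "nbhd V adj x = {y \<in> V. adj x y}"

definition card_leq :: "'a set \<Rightarrow> 'a set \<Rightarrow> bool" where
  "card_leq A B \<longleftrightarrow> (\<exists>f. inj_on f A \<and> f ` A \<subseteq> B)"

definition majority_list_coloring ::
  "'v set \<Rightarrow> ('v \<Rightarrow> 'v \<Rightarrow> bool) \<Rightarrow> ('v \<Rightarrow> 'c set) \<Rightarrow> ('v \<Rightarrow> 'c) \<Rightarrow> bool" where
  "majority_list_coloring V adj L c \<longleftrightarrow>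
     (\<forall>x\<in>V. c x \<in> L x) \<and>
     (\<forall>x\<in>V. card_leq {y \<in> nbhd V adj x. c y = c x} {y \<in> nbhd V adj x. c y \<noteq> c x})"

end

theory Submission
  imports Defs "HOL-Library.Equipollence" "HOL-Analysis.Function_Topology"
begin

text \<open>
  Call a vertex big if infinitely many edges contain it. The edges at big vertices are coloured
  first, so that for every big vertex \<open>x\<close> and every colour \<open>a\<close> the edges at \<open>x\<close> not coloured \<open>a\<close>
  are as many as all edges at \<open>x\<close>: each such star is cut into countably infinite blocks, blocks
  sharing edges form countable clusters, and inside a countable family of infinite sets one can
  keep picking two fresh elements of each set and colour them differently. An edge \<open>{x, z}\<close>
  whose endpoint \<open>x\<close> is big and lies on at least as many edges as \<open>z\<close> has at most as many
  neighbours as there are edges at \<open>x\<close>, and that many of them have a different colour.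

  The remaining edges have finitely many neighbours. For finitely many of them, a colouring
  minimising the number of monochromatic edges at them satisfies the majority condition there,
  since recolouring an edge violating it lowers that number; compactness of the product of the
  finite lists extends this to all of them.
\<close>

unbundle cardinal_syntax

lemma card_leq_iff_lepoll: "card_leq A B \<longleftrightarrow> A \<lesssim> B"
  by (simp add: card_leq_def lepoll_def)

lemma lepoll_total: "A \<lesssim> B \<or> B \<lesssim> A"
proof -
  have "|A| \<le>o |B| \<or> |B| \<le>o |A|"
    by (rule ordLeq_total) (simp_all add: card_of_Well_order)
  then show ?thesis
    unfolding lepoll_def card_of_ordLeq[symmetric] by blast
qed

lemma Un_lepoll_infinite:
  assumes "infinite A" "B \<lesssim> A"
  shows "A \<union> B \<lesssim> A"
proof -
  have "|B| \<le>o |A|"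
    using assms(2) unfolding lepoll_def card_of_ordLeq[symmetric] by blast
  then have "|A \<union> B| \<le>o |A|"
    using card_of_Un_ordLeq_infinite_Field[of "|A|" A B] assms(1)
    by (simp add: Field_card_of card_of_card_order_on card_of_refl ordIso_imp_ordLeq)
  then show ?thesis
    unfolding lepoll_def card_of_ordLeq[symmetric] by blast
qed

lemma infinite_eqpoll_Times_nat:
  assumes "infinite A"
  shows "A \<approx> A \<times> (UNIV :: nat set)"
proof -
  have "|UNIV :: nat set| \<le>o |A|"
    using assms infinite_iff_card_of_nat by blast
  then have "|A \<times> (UNIV :: nat set)| =o |A|"
    using card_of_Times_infinite[of A "UNIV :: nat set"] assms by auto
  then show ?thesis
    unfolding eqpoll_def by (meson card_of_ordIso ordIso_symmetric)
qed

section \<open>Colourings of families of infinite sets\<close>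

primrec fresh_reps :: "(nat \<Rightarrow> 'a set) \<Rightarrow> nat \<Rightarrow> 'a list" where
  "fresh_reps B 0 = []"
| "fresh_reps B (Suc k) = fresh_reps B k @ [SOME x. x \<in> B k \<and> x \<notin> set (fresh_reps B k)]"

lemma infinite_sets_distinct_representatives:
  fixes B :: "nat \<Rightarrow> 'a set"
  assumes "\<And>k. infinite (B k)"
  shows "\<exists>r. inj r \<and> (\<forall>k. r k \<in> B k)"
proof -
  define r where "r k = (SOME x. x \<in> B k \<and> x \<notin> set (fresh_reps B k))" for k
  have set_reps: "set (fresh_reps B k) = r ` {..<k}" for k
    by (induction k) (auto simp: r_def lessThan_Suc)
  have r: "r k \<in> B k \<and> r k \<notin> r ` {..<k}" for k
  proof -
    have "infinite (B k - set (fresh_reps B k))"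
      using assms[of k] by simp
    then have "\<exists>x. x \<in> B k \<and> x \<notin> set (fresh_reps B k)"
      using infinite_imp_nonempty by blast
    then show ?thesis
      unfolding r_def set_reps[symmetric] by (rule someI_ex)
  qed
  have "inj r"
  proof (rule injI)
    fix i j assume "r i = r j"
    then show "i = j"
      using r[of i] r[of j] by (cases i j rule: linorder_cases) (metis imageI lessThan_iff)+
  qed
  then show ?thesis
    using r by blast
qed

lemma card_2_obtain_other:
  assumes "card X = 2"
  obtains y where "y \<in> X" "y \<noteq> x"
  using assms by (metis card_2_iff insertI1 insert_commute)

lemma countable_enumeration_infinitely_often:
  assumes "countable A" "A \<noteq> {}"
  shows "\<exists>q :: nat \<Rightarrow> 'a. (\<forall>k. q k \<in> A) \<and> (\<forall>a\<in>A. infinite {k. q k = a})"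
proof -
  define p where "p = from_nat_into (A \<times> (UNIV :: nat set))"
  have "A \<times> (UNIV :: nat set) \<noteq> {}" "countable (A \<times> (UNIV :: nat set))"
    using assms by auto
  then have range_p: "range p = A \<times> UNIV"
    unfolding p_def by (rule range_from_nat_into)
  then have "fst (p k) \<in> A" for k
    by (metis SigmaD1 prod.collapse rangeI)
  moreover have "infinite {k. fst (p k) = a}" if "a \<in> A" for a
  proof -
    have "{a} \<times> UNIV \<subseteq> p ` {k. fst (p k) = a}"
    proof
      fix x assume x: "x \<in> {a} \<times> (UNIV :: nat set)"
      then have "x \<in> range p"
        using range_p that by auto
      then obtain k where "x = p k"
        by blast
      with x show "x \<in> p ` {k. fst (p k) = a}"
        by auto
    qed
    moreover have "infinite ({a} \<times> (UNIV :: nat set))"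
      by (simp add: finite_cartesian_product_iff)
    ultimately show ?thesis
      by (meson finite_imageI finite_subset)
  qed
  ultimately show ?thesis
    by (intro exI[of _ "\<lambda>k. fst (p k)"]) simp
qed

lemma list_coloring_separating_pairs:
  fixes r :: "nat \<Rightarrow> 'e" and L :: "'e \<Rightarrow> 'c set"
  assumes "inj r" "range r \<subseteq> U" and L2: "\<And>e. e \<in> U \<Longrightarrow> card (L e) = 2"
  shows "\<exists>col. (\<forall>e\<in>U. col e \<in> L e) \<and> (\<forall>k. col (r (2 * k)) \<noteq> col (r (2 * k + 1)))"
proof -
  define \<alpha> where "\<alpha> e = (SOME c. c \<in> L e)" for e
  have \<alpha>: "\<alpha> e \<in> L e" if "e \<in> U" for e
    using L2[OF that] unfolding \<alpha>_def by (metis card.empty ex_in_conv someI_ex zero_neq_numeral)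
  \<comment> \<open>For odd \<open>k\<close>, the element \<open>r k\<close> avoids the default colour of its partner \<open>r (k - 1)\<close>.\<close>
  define col where "col e =
    (if e \<in> r ` {k. odd k} then (SOME c. c \<in> L e \<and> c \<noteq> \<alpha> (r (inv r e - 1))) else \<alpha> e)" for e
  have col_odd: "col (r (2 * k + 1)) \<in> L (r (2 * k + 1)) \<and> col (r (2 * k + 1)) \<noteq> \<alpha> (r (2 * k))" for k
  proof -
    obtain c where "c \<in> L (r (2 * k + 1))" "c \<noteq> \<alpha> (r (2 * k))"
      using card_2_obtain_other[OF L2] assms(2) by blast
    then show ?thesis
      using \<open>inj r\<close> unfolding col_def by (simp add: someI_ex[of "\<lambda>c. c \<in> _ \<and> c \<noteq> _"] exI)
  qed
  have "col e \<in> L e" if "e \<in> U" for e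
  proof (cases "e \<in> r ` {k. odd k}")
    case True
    then obtain k where "e = r (2 * k + 1)"
      by (auto elim: oddE)
    then show ?thesis using col_odd by simp
  next
    case False
    then show ?thesis using \<alpha>[OF that] unfolding col_def by simp
  qed
  moreover have "col (r (2 * k)) = \<alpha> (r (2 * k))" for k
    using \<open>inj r\<close> unfolding col_def by (auto dest: injD)
  ultimately show ?thesis
    using col_odd by metis
qed

lemma countable_family_list_coloring:
  fixes Bs :: "'e set set" and L :: "'e \<Rightarrow> 'c set"
  assumes "countable Bs" and "\<And>B. B \<in> Bs \<Longrightarrow> infinite B"
    and L2: "\<And>e. e \<in> \<Union>Bs \<Longrightarrow> card (L e) = 2"
  shows "\<exists>col. (\<forall>e\<in>\<Union>Bs. col e \<in> L e) \<and> (\<forall>B\<in>Bs. \<forall>c. infinite {e\<in>B. col e \<noteq> c})"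
proof (cases "Bs = {}")
  case True
  then show ?thesis by simp
next
  case False
  obtain q :: "nat \<Rightarrow> 'e set" where q: "\<And>k. q k \<in> Bs" and often: "\<And>B. B \<in> Bs \<Longrightarrow> infinite {k. q k = B}"
    using countable_enumeration_infinitely_often[OF \<open>countable Bs\<close> False] by blast
  \<comment> \<open>\<open>q\<close> lists every member of \<open>Bs\<close> infinitely often, and the two representatives
    \<open>r (2 * k)\<close>, \<open>r (2 * k + 1)\<close> of \<open>q k\<close> will be coloured differently.\<close>
  have "infinite (q (k div 2))" for k
    using assms(2) q by blast
  then obtain r :: "nat \<Rightarrow> 'e" where "inj r" and r: "\<And>k. r k \<in> q (k div 2)"
    using infinite_sets_distinct_representatives[of "\<lambda>k. q (k div 2)"] by blast
  have "range r \<subseteq> \<Union>Bs"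
    using r q by blast
  then have "\<exists>col. (\<forall>e\<in>\<Union>Bs. col e \<in> L e) \<and> (\<forall>k. col (r (2 * k)) \<noteq> col (r (2 * k + 1)))"
    by (rule list_coloring_separating_pairs[OF \<open>inj r\<close> _ L2])
  then obtain col where col_L: "\<forall>e\<in>\<Union>Bs. col e \<in> L e"
    and separating: "\<forall>k. col (r (2 * k)) \<noteq> col (r (2 * k + 1))"
    by blast
  have "infinite {e\<in>B. col e \<noteq> c}" if "B \<in> Bs" for B c
  proof -
    define p where "p k = (if col (r (2 * k)) \<noteq> c then 2 * k else 2 * k + 1)" for k
    have "inj p"
      by (rule inj_on_inverseI[where g = "\<lambda>n. n div 2"]) (simp add: p_def)
    then have "inj_on (r \<circ> p) {k. q k = B}"
      using inj_compose[OF \<open>inj r\<close>] inj_on_subset by blast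
    then have "infinite ((r \<circ> p) ` {k. q k = B})"
      using often[OF that] finite_image_iff by blast
    moreover have "r (p k) \<in> q k \<and> col (r (p k)) \<noteq> c" for k
      using r[of "2 * k"] r[of "2 * k + 1"] separating[rule_format, of k] unfolding p_def by auto
    then have "(r \<circ> p) ` {k. q k = B} \<subseteq> {e\<in>B. col e \<noteq> c}"
      by auto
    ultimately show ?thesis
      by (rule infinite_super[rotated])
  qed
  then show ?thesis
    using col_L by blast
qed

lemma countable_rtrancl_Image:
  assumes "\<And>x. countable (R `` {x})"
  shows "countable (R\<^sup>* `` {a})"
proof -
  have "countable ((R ^^ n) `` {a})" for n
  proof (induction n)
    case 0
    then show ?case by simp
  next
    case (Suc n)
    have "(R ^^ Suc n) `` {a} = (\<Union>y\<in>(R ^^ n) `` {a}. R `` {y})"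
      by auto
    then show ?case
      using Suc assms by simp
  qed
  moreover have "R\<^sup>* `` {a} = (\<Union>n. (R ^^ n) `` {a})"
    by (auto simp: rtrancl_power)
  ultimately show ?thesis
    by simp
qed

lemma locally_countable_family_list_coloring:
  fixes Bs :: "'e set set" and L :: "'e \<Rightarrow> 'c set"
  assumes countable: "\<And>B. B \<in> Bs \<Longrightarrow> countable B" and infinite: "\<And>B. B \<in> Bs \<Longrightarrow> infinite B"
    and locally_countable: "\<And>e. countable {B \<in> Bs. e \<in> B}"
    and L2: "\<And>e. e \<in> \<Union>Bs \<Longrightarrow> card (L e) = 2"
  shows "\<exists>col. (\<forall>e\<in>\<Union>Bs. col e \<in> L e) \<and> (\<forall>B\<in>Bs. \<forall>c. infinite {e\<in>B. col e \<noteq> c})"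
proof -
  \<comment> \<open>The classes of \<open>R\<^sup>*\<close> are countable and each member of \<open>Bs\<close> lies in a single class,
    so the countable case applies class by class.\<close>
  define R where "R = {(e, f). \<exists>B\<in>Bs. e \<in> B \<and> f \<in> B}"
  define cls where "cls e = R\<^sup>* `` {e}" for e
  define fam where "fam C = {B \<in> Bs. B \<inter> C \<noteq> {}}" for C
  have "sym R"
    unfolding R_def sym_def by blast
  then have cls_eq: "cls f = cls e" if "f \<in> cls e" for e f
    using that unfolding cls_def
    by (metis Image_singleton_iff rtrancl_trans sym_rtrancl symD subsetI subset_antisym)
  have R_Image: "R `` {e} = (\<Union>B\<in>{B \<in> Bs. e \<in> B}. B)" for e
    unfolding R_def by auto
  have "countable (R `` {e})" for e
    unfolding R_Image using countable locally_countable by (intro countable_UN) auto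
  then have countable_cls: "countable (cls e)" for e
    unfolding cls_def by (rule countable_rtrancl_Image)
  have "fam (cls e) = (\<Union>f\<in>cls e. {B \<in> Bs. f \<in> B})" for e
    unfolding fam_def by auto
  then have "countable (fam (cls e))" for e
    using countable_cls locally_countable by simp
  then have "\<forall>C\<in>range cls. \<exists>col. (\<forall>e\<in>\<Union>(fam C). col e \<in> L e) \<and>
      (\<forall>B\<in>fam C. \<forall>c. infinite {e\<in>B. col e \<noteq> c})"
    using infinite L2 unfolding fam_def
    by (intro ballI countable_family_list_coloring) auto
  then obtain colC where colC: "\<And>e. \<forall>f\<in>\<Union>(fam (cls e)). colC (cls e) f \<in> L f"
    "\<And>e. \<forall>B\<in>fam (cls e). \<forall>c. infinite {f\<in>B. colC (cls e) f \<noteq> c}"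
    by (metis bchoice rangeI)
  define col where "col e = colC (cls e) e" for e
  have block_cls: "B \<subseteq> cls e" "B \<in> fam (cls e)" if "B \<in> Bs" "e \<in> B" for B e
    using that unfolding cls_def fam_def R_def by auto
  have "col e \<in> L e" if "e \<in> \<Union>Bs" for e
    using that colC(1) block_cls unfolding col_def by blast
  moreover have "infinite {f\<in>B. col f \<noteq> c}" if B: "B \<in> Bs" for B c
  proof -
    obtain e where e: "e \<in> B"
      using infinite[OF B] by (metis finite.emptyI ex_in_conv)
    have "cls f = cls e" if "f \<in> B" for f
      using block_cls(1)[OF B e] that cls_eq by blast
    then have "{f\<in>B. col f \<noteq> c} = {f\<in>B. colC (cls e) f \<noteq> c}"
      unfolding col_def by auto
    then show ?thesis
      using colC(2) block_cls[OF B e] by simp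
  qed
  ultimately show ?thesis
    by blast
qed

lemma bij_betw_Times_nat_fibre:
  assumes h: "bij_betw h A (I \<times> (UNIV :: nat set))" and "i \<in> I"
  shows "countable {a \<in> A. fst (h a) = i}" "infinite {a \<in> A. fst (h a) = i}"
proof -
  let ?F = "{a \<in> A. fst (h a) = i}"
  have image: "h ` ?F = {i} \<times> UNIV"
  proof
    show "h ` ?F \<subseteq> {i} \<times> UNIV"
      unfolding image_subset_iff by (simp add: mem_Times_iff)
    show "{i} \<times> UNIV \<subseteq> h ` ?F"
    proof
      fix p assume p: "p \<in> {i} \<times> (UNIV :: nat set)"
      then have "p \<in> h ` A"
        using h \<open>i \<in> I\<close> by (auto simp: bij_betw_def)
      then obtain a where "a \<in> A" "p = h a"
        by blast
      moreover from p this(2) have "fst (h a) = i"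
        by (simp add: mem_Times_iff)
      ultimately show "p \<in> h ` ?F"
        by blast
    qed
  qed
  have "inj_on h ?F"
    using h by (auto simp: bij_betw_def intro: inj_on_subset)
  then show "countable ?F"
    using countable_image_inj_eq[of h ?F] image by simp
  show "infinite ?F"
    using image finite_imageI[of ?F h] by (auto simp: finite_cartesian_product_iff)
qed

lemma lepoll_if_infinite_in_fibres:
  fixes h :: "'a \<Rightarrow> 'i \<times> nat"
  assumes h: "bij_betw h A (I \<times> (UNIV :: nat set))"
    and "\<And>i. i \<in> I \<Longrightarrow> infinite {a \<in> A. fst (h a) = i \<and> P a}"
  shows "A \<lesssim> {a \<in> A. P a}"
proof -
  have "\<forall>i\<in>I. \<exists>t :: nat \<Rightarrow> 'a. inj t \<and> range t \<subseteq> {a \<in> A. fst (h a) = i \<and> P a}"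
    by (intro ballI infinite_countable_subset assms(2))
  then obtain t :: "'i \<Rightarrow> nat \<Rightarrow> 'a"
    where t: "\<forall>i\<in>I. inj (t i) \<and> range (t i) \<subseteq> {a \<in> A. fst (h a) = i \<and> P a}"
    by (rule bchoice[THEN exE])
  have h_in: "fst (h a) \<in> I" if "a \<in> A" for a
    using bij_betw_apply[OF h that] by (simp add: mem_Times_iff)
  define g where "g a = t (fst (h a)) (snd (h a))" for a
  have g: "g a \<in> A \<and> fst (h (g a)) = fst (h a) \<and> P (g a)" if "a \<in> A" for a
    using t h_in[OF that] unfolding g_def by blast
  have "inj_on g A"
  proof (rule inj_onI)
    fix a b assume ab: "a \<in> A" "b \<in> A" "g a = g b"
    then have fst_eq: "fst (h a) = fst (h b)"
      using g by metis
    then have "snd (h a) = snd (h b)"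
      using ab t h_in unfolding g_def by (metis injD)
    with fst_eq have "h a = h b"
      by (rule prod_eqI)
    then show "a = b"
      using h ab by (auto simp: bij_betw_def dest: inj_onD)
  qed
  moreover have "g ` A \<subseteq> {a \<in> A. P a}"
    using g by blast
  ultimately show ?thesis
    unfolding lepoll_def by blast
qed

lemma locally_finite_family_list_coloring_lepoll:
  fixes S :: "'v \<Rightarrow> 'e set" and L :: "'e \<Rightarrow> 'c set"
  assumes infinite: "\<And>x. x \<in> X \<Longrightarrow> infinite (S x)"
    and locally_finite: "\<And>e. finite {x \<in> X. e \<in> S x}"
    and L2: "\<And>x e. x \<in> X \<Longrightarrow> e \<in> S x \<Longrightarrow> card (L e) = 2"
  shows "\<exists>col. (\<forall>x\<in>X. \<forall>e\<in>S x. col e \<in> L e) \<and> (\<forall>x\<in>X. \<forall>c. S x \<lesssim> {e \<in> S x. col e \<noteq> c})"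
proof -
  have "\<forall>x\<in>X. \<exists>h. bij_betw h (S x) (S x \<times> (UNIV :: nat set))"
    using infinite infinite_eqpoll_Times_nat unfolding eqpoll_def by blast
  then obtain h :: "'v \<Rightarrow> 'e \<Rightarrow> 'e \<times> nat"
    where h_ball: "\<forall>x\<in>X. bij_betw (h x) (S x) (S x \<times> (UNIV :: nat set))"
    by (rule bchoice[THEN exE])
  then have h: "\<And>x. x \<in> X \<Longrightarrow> bij_betw (h x) (S x) (S x \<times> (UNIV :: nat set))"
    by blast
  define block where "block x f = {e \<in> S x. fst (h x e) = f}" for x f
  define Bs where "Bs = {block x f | x f. x \<in> X \<and> f \<in> S x}"
  have h_in: "fst (h x e) \<in> S x" if "x \<in> X" "e \<in> S x" for x e
    using bij_betw_apply[OF h[OF that(1)] that(2)] by (simp add: mem_Times_iff)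
  have "{B \<in> Bs. e \<in> B} \<subseteq> (\<lambda>x. block x (fst (h x e))) ` {x \<in> X. e \<in> S x}" for e
  proof
    fix B assume "B \<in> {B \<in> Bs. e \<in> B}"
    then obtain x f where "x \<in> X" "B = block x f" "e \<in> B"
      unfolding Bs_def by blast
    then show "B \<in> (\<lambda>x. block x (fst (h x e))) ` {x \<in> X. e \<in> S x}"
      unfolding block_def by auto
  qed
  then have "countable {B \<in> Bs. e \<in> B}" for e
    using countable_finite[OF finite_imageI[OF locally_finite]] by (rule countable_subset)
  moreover have "countable B" "infinite B" if "B \<in> Bs" for B
    using that bij_betw_Times_nat_fibre[OF h] unfolding Bs_def block_def by auto
  moreover have "card (L e) = 2" if "e \<in> \<Union>Bs" for e
    using that L2 unfolding Bs_def block_def by blast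
  ultimately obtain col where col_L: "\<forall>e\<in>\<Union>Bs. col e \<in> L e"
    and col_block: "\<forall>B\<in>Bs. \<forall>c. infinite {e\<in>B. col e \<noteq> c}"
    using locally_countable_family_list_coloring[of Bs L] by blast
  have block_in: "block x (fst (h x e)) \<in> Bs" "e \<in> block x (fst (h x e))" if "x \<in> X" "e \<in> S x" for x e
    using that h_in unfolding Bs_def block_def by auto
  have "col e \<in> L e" if "x \<in> X" "e \<in> S x" for x e
    using col_L block_in[OF that] by blast
  moreover have "S x \<lesssim> {e \<in> S x. col e \<noteq> c}" if "x \<in> X" for x c
  proof (rule lepoll_if_infinite_in_fibres[OF h[OF that]])
    fix f assume "f \<in> S x"
    then have "infinite {e \<in> block x f. col e \<noteq> c}"
      using that col_block unfolding Bs_def by blast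
    moreover have "{e \<in> block x f. col e \<noteq> c} = {e \<in> S x. fst (h x e) = f \<and> col e \<noteq> c}"
      unfolding block_def by auto
    ultimately show "infinite {e \<in> S x. fst (h x e) = f \<and> col e \<noteq> c}"
      by simp
  qed
  ultimately show ?thesis
    by blast
qed

section \<open>Majority colourings with finite neighbourhoods\<close>

definition majority_at :: "'v set \<Rightarrow> ('v \<Rightarrow> 'v \<Rightarrow> bool) \<Rightarrow> ('v \<Rightarrow> 'c) \<Rightarrow> 'v \<Rightarrow> bool" where
  "majority_at V adj c x \<longleftrightarrow>
     card_leq {y \<in> nbhd V adj x. c y = c x} {y \<in> nbhd V adj x. c y \<noteq> c x}"

lemma majority_list_coloring_iff:
  "majority_list_coloring V adj L c \<longleftrightarrow> (\<forall>x\<in>V. c x \<in> L x) \<and> (\<forall>x\<in>V. majority_at V adj c x)"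
  by (simp add: majority_list_coloring_def majority_at_def)

lemma majority_at_iff_card:
  assumes "finite (nbhd V adj x)"
  shows "majority_at V adj c x \<longleftrightarrow>
    card {y \<in> nbhd V adj x. c y = c x} \<le> card {y \<in> nbhd V adj x. c y \<noteq> c x}"
  using assms by (simp add: majority_at_def card_leq_iff_lepoll lepoll_iff_card_le)

lemma majority_at_cong:
  assumes "\<And>y. y \<in> insert x (nbhd V adj x) \<Longrightarrow> c y = c' y"
  shows "majority_at V adj c x \<longleftrightarrow> majority_at V adj c' x"
proof -
  have "{y \<in> nbhd V adj x. c y = c x} = {y \<in> nbhd V adj x. c' y = c' x}"
    "{y \<in> nbhd V adj x. c y \<noteq> c x} = {y \<in> nbhd V adj x. c' y \<noteq> c' x}"
    using assms by auto
  then show ?thesis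
    unfolding majority_at_def by simp
qed

definition monochromatic :: "('v \<Rightarrow> 'c) \<Rightarrow> 'v set \<Rightarrow> bool" where
  "monochromatic c p \<longleftrightarrow> (\<forall>a\<in>p. \<forall>b\<in>p. c a = c b)"

lemma card_monochromatic_recolor_less:
  fixes P :: "'v set set" and c :: "'v \<Rightarrow> 'c"
  assumes "finite P" and "finite N" and "v \<notin> N"
    and edges_at_v: "{p \<in> P. v \<in> p} = (\<lambda>w. {v, w}) ` N"
    and "b \<noteq> c v"
    and "card {w \<in> N. c w \<noteq> c v} < card {w \<in> N. c w = c v}"
  shows "card {p \<in> P. monochromatic (c(v := b)) p} < card {p \<in> P. monochromatic c p}"
proof -
  let ?c' = "c(v := b)"
  have split: "card {p \<in> P. monochromatic d p} =
      card {p \<in> P. v \<notin> p \<and> monochromatic d p} + card {p \<in> P. v \<in> p \<and> monochromatic d p}" for d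
    using \<open>finite P\<close> by (subst card_Un_disjoint[symmetric]) (auto intro: arg_cong[where f = card])
  have away: "{p \<in> P. v \<notin> p \<and> monochromatic ?c' p} = {p \<in> P. v \<notin> p \<and> monochromatic c p}"
    unfolding monochromatic_def by auto
  have at_v: "card {p \<in> P. v \<in> p \<and> monochromatic d p} = card {w \<in> N. d w = d v}" for d
  proof -
    have "{p \<in> P. v \<in> p \<and> monochromatic d p} = {p \<in> (\<lambda>w. {v, w}) ` N. monochromatic d p}"
      using edges_at_v by blast
    also have "\<dots> = (\<lambda>w. {v, w}) ` {w \<in> N. monochromatic d {v, w}}"
      by blast
    also have "\<dots> = (\<lambda>w. {v, w}) ` {w \<in> N. d w = d v}"
      unfolding monochromatic_def by auto
    finally have "{p \<in> P. v \<in> p \<and> monochromatic d p} = (\<lambda>w. {v, w}) ` {w \<in> N. d w = d v}" .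
    moreover have "inj_on (\<lambda>w. {v, w}) N"
      using \<open>v \<notin> N\<close> by (auto simp: inj_on_def doubleton_eq_iff)
    ultimately show ?thesis
      by (simp add: card_image inj_on_subset)
  qed
  have fewer_at_v: "card {w \<in> N. ?c' w = ?c' v} < card {w \<in> N. c w = c v}"
  proof -
    have "card {w \<in> N. ?c' w = ?c' v} = card {w \<in> N. c w = b}"
      using \<open>v \<notin> N\<close> by (auto intro: arg_cong[where f = card])
    also have "\<dots> \<le> card {w \<in> N. c w \<noteq> c v}"
      using \<open>finite N\<close> \<open>b \<noteq> c v\<close> by (intro card_mono) auto
    finally show ?thesis
      using assms(6) by linarith
  qed
  show ?thesis
    unfolding split[of c] split[of ?c'] away at_v using fewer_at_v by simp
qed

lemma edges_through_vertex:
  assumes "symp adj" and "F \<subseteq> V" "v \<in> F"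
  shows "{p \<in> (\<Union>x\<in>F. (\<lambda>y. {x, y}) ` nbhd V adj x). v \<in> p} = (\<lambda>w. {v, w}) ` nbhd V adj v"
proof
  show "{p \<in> (\<Union>x\<in>F. (\<lambda>y. {x, y}) ` nbhd V adj x). v \<in> p} \<subseteq> (\<lambda>w. {v, w}) ` nbhd V adj v"
  proof clarify
    fix x y assume "x \<in> F" "y \<in> nbhd V adj x" "v \<in> {x, y}"
    then consider "v = x" | "v = y" "x \<in> nbhd V adj v"
      using \<open>symp adj\<close> \<open>F \<subseteq> V\<close> unfolding nbhd_def by (blast dest: sympD)
    then show "{x, y} \<in> (\<lambda>w. {v, w}) ` nbhd V adj v"
      using \<open>y \<in> nbhd V adj x\<close> by cases (auto simp: insert_commute)
  qed
  show "(\<lambda>w. {v, w}) ` nbhd V adj v \<subseteq> {p \<in> (\<Union>x\<in>F. (\<lambda>y. {x, y}) ` nbhd V adj x). v \<in> p}"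
    using \<open>v \<in> F\<close> by blast
qed

lemma finite_subset_majority_list_coloring:
  fixes col :: "'v \<Rightarrow> 'c" and L :: "'v \<Rightarrow> 'c set"
  assumes "symp adj" "irreflp adj"
    and "F \<subseteq> Vs" "Vs \<subseteq> V" "finite F"
    and finite_nbhd: "\<And>x. x \<in> Vs \<Longrightarrow> finite (nbhd V adj x)"
    and L2: "\<And>x. x \<in> Vs \<Longrightarrow> card (L x) = 2"
  shows "\<exists>g\<in>Pi\<^sub>E Vs L. \<forall>x\<in>F. majority_at V adj (override_on col g Vs) x"
proof -
  define P where "P = (\<Union>x\<in>F. (\<lambda>y. {x, y}) ` nbhd V adj x)"
  have "finite P"
    unfolding P_def using \<open>finite F\<close> \<open>F \<subseteq> Vs\<close> finite_nbhd by blast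
  define \<Phi> where "\<Phi> g = card {p \<in> P. monochromatic (override_on col g Vs) p}" for g
  have "L x \<noteq> {}" if "x \<in> Vs" for x
    using L2[OF that] by auto
  then obtain g0 where "g0 \<in> Pi\<^sub>E Vs L"
    by (metis PiE_eq_empty_iff ex_in_conv)
  then obtain g where g: "g \<in> Pi\<^sub>E Vs L" and g_min: "\<And>g'. g' \<in> Pi\<^sub>E Vs L \<Longrightarrow> \<Phi> g \<le> \<Phi> g'"
    using ex_has_least_nat[of "\<lambda>g. g \<in> Pi\<^sub>E Vs L" g0 \<Phi>] by blast
  have "majority_at V adj (override_on col g Vs) v" if "v \<in> F" for v
  proof (rule ccontr)
    let ?c = "override_on col g Vs"
    assume "\<not> majority_at V adj ?c v"
    then have more_same: "card {w \<in> nbhd V adj v. ?c w \<noteq> ?c v} < card {w \<in> nbhd V adj v. ?c w = ?c v}"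
      using majority_at_iff_card finite_nbhd \<open>v \<in> F\<close> \<open>F \<subseteq> Vs\<close> by fastforce
    have "v \<in> Vs"
      using \<open>v \<in> F\<close> \<open>F \<subseteq> Vs\<close> by blast
    obtain b where "b \<in> L v" "b \<noteq> g v"
      using card_2_obtain_other[OF L2[OF \<open>v \<in> Vs\<close>]] by blast
    define g' where "g' = g(v := b)"
    have "g' \<in> Pi\<^sub>E Vs L"
      using g \<open>b \<in> L v\<close> \<open>v \<in> Vs\<close> unfolding g'_def by (auto simp: PiE_def extensional_def)
    have "override_on col g' Vs = ?c(v := b)"
      using \<open>v \<in> Vs\<close> unfolding g'_def override_on_def by auto
    moreover have "v \<notin> nbhd V adj v"
      using \<open>irreflp adj\<close> unfolding nbhd_def by (simp add: irreflpD)
    moreover have "{p \<in> P. v \<in> p} = (\<lambda>w. {v, w}) ` nbhd V adj v"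
      unfolding P_def using \<open>symp adj\<close> \<open>F \<subseteq> Vs\<close> \<open>Vs \<subseteq> V\<close> \<open>v \<in> F\<close>
      by (intro edges_through_vertex) auto
    ultimately have "\<Phi> g' < \<Phi> g"
      unfolding \<Phi>_def using \<open>finite P\<close> finite_nbhd[OF \<open>v \<in> Vs\<close>] \<open>b \<noteq> g v\<close> \<open>v \<in> Vs\<close> more_same
      by (simp add: card_monochromatic_recolor_less)
    then show False
      using g_min[OF \<open>g' \<in> Pi\<^sub>E Vs L\<close>] by simp
  qed
  then show ?thesis
    using g by blast
qed

lemma closedin_product_discrete_finitely_determined:
  fixes A :: "'i \<Rightarrow> 'c set"
  assumes "finite D" "D \<subseteq> I"
    and determined: "\<And>g g'. g \<in> Pi\<^sub>E I A \<Longrightarrow> g' \<in> Pi\<^sub>E I A \<Longrightarrow> (\<forall>d\<in>D. g d = g' d) \<Longrightarrow> Q g \<Longrightarrow> Q g'"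
  shows "closedin (product_topology (\<lambda>i. discrete_topology (A i)) I) {g \<in> Pi\<^sub>E I A. Q g}"
proof -
  let ?T = "product_topology (\<lambda>i. discrete_topology (A i)) I"
  have "openin ?T (topspace ?T - {g \<in> Pi\<^sub>E I A. Q g})"
  proof (subst openin_subopen, intro ballI)
    fix g assume "g \<in> topspace ?T - {g \<in> Pi\<^sub>E I A. Q g}"
    then have g: "g \<in> Pi\<^sub>E I A" "\<not> Q g"
      by auto
    define U where "U = (\<Inter>d\<in>D. {g' \<in> topspace ?T. g' d \<in> {g d}}) \<inter> topspace ?T"
    have "openin ?T U"
      unfolding U_def
    proof (intro openin_INT \<open>finite D\<close>)
      fix d assume "d \<in> D"
      then have "d \<in> I"
        using \<open>D \<subseteq> I\<close> by blast
      then show "openin ?T {g' \<in> topspace ?T. g' d \<in> {g d}}"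
        using g(1) by (intro openin_continuous_map_preimage[OF continuous_map_product_projection]) auto
    qed
    moreover have "U \<subseteq> topspace ?T - {g \<in> Pi\<^sub>E I A. Q g}"
      using determined[OF _ g(1)] g(2) unfolding U_def by auto
    moreover have "g \<in> U"
      using g(1) unfolding U_def by auto
    ultimately show "\<exists>U. openin ?T U \<and> g \<in> U \<and> U \<subseteq> topspace ?T - {g \<in> Pi\<^sub>E I A. Q g}"
      by blast
  qed
  then show ?thesis
    unfolding closedin_def by auto
qed

lemma compact_space_INT_nonempty:
  assumes "compact_space X" and "\<And>i. i \<in> I \<Longrightarrow> closedin X (K i)"
    and "\<And>F. finite F \<Longrightarrow> F \<subseteq> I \<Longrightarrow> \<exists>x\<in>topspace X. \<forall>i\<in>F. x \<in> K i"
  shows "\<exists>x\<in>topspace X. \<forall>i\<in>I. x \<in> K i"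
proof -
  have "\<Inter>(insert (topspace X) (K ` I)) \<noteq> {}"
  proof (rule \<open>compact_space X\<close>[unfolded compact_space_fip, rule_format], intro conjI allI impI ballI)
    fix C assume "C \<in> insert (topspace X) (K ` I)"
    then show "closedin X C"
      using assms(2) by auto
  next
    fix \<F> assume \<F>: "finite \<F> \<and> \<F> \<subseteq> insert (topspace X) (K ` I)"
    then have "finite (\<F> - {topspace X})" "\<F> - {topspace X} \<subseteq> K ` I"
      by auto
    then obtain F where "F \<subseteq> I" "finite F" "\<F> - {topspace X} = K ` F"
      using finite_subset_image[of "\<F> - {topspace X}" K I] by blast
    then obtain x where "x \<in> topspace X" "\<forall>i\<in>F. x \<in> K i"
      using assms(3) by meson
    have "x \<in> C" if "C \<in> \<F>" for C
    proof (cases "C = topspace X")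
      case False
      with that have "C \<in> K ` F"
        using \<open>\<F> - {topspace X} = K ` F\<close> by (metis Diff_iff singletonD)
      then show ?thesis
        using \<open>\<forall>i\<in>F. x \<in> K i\<close> by blast
    qed (use \<open>x \<in> topspace X\<close> in simp)
    then show "\<Inter>\<F> \<noteq> {}"
      by blast
  qed
  then show ?thesis
    by blast
qed

lemma locally_finite_majority_list_coloring:
  fixes col :: "'v \<Rightarrow> 'c" and L :: "'v \<Rightarrow> 'c set"
  assumes "symp adj" "irreflp adj" "Vs \<subseteq> V"
    and finite_nbhd: "\<And>x. x \<in> Vs \<Longrightarrow> finite (nbhd V adj x)"
    and L2: "\<And>x. x \<in> Vs \<Longrightarrow> card (L x) = 2"
  shows "\<exists>g\<in>Pi\<^sub>E Vs L. \<forall>x\<in>Vs. majority_at V adj (override_on col g Vs) x"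
proof -
  let ?T = "product_topology (\<lambda>x. discrete_topology (L x)) Vs"
  have "finite (L x)" if "x \<in> Vs" for x
    using L2[OF that] by (metis card.infinite zero_neq_numeral)
  then have "compact_space ?T"
    by (simp add: compact_space_product_topology compact_space_discrete_topology)
  moreover have "closedin ?T {g \<in> Pi\<^sub>E Vs L. majority_at V adj (override_on col g Vs) x}"
    if "x \<in> Vs" for x
  proof (rule closedin_product_discrete_finitely_determined)
    show "finite (insert x (nbhd V adj x) \<inter> Vs)"
      using finite_nbhd[OF that] by blast
    fix g g' :: "'v \<Rightarrow> 'c" assume "\<forall>d\<in>insert x (nbhd V adj x) \<inter> Vs. g d = g' d"
    then have "\<And>y. y \<in> insert x (nbhd V adj x) \<Longrightarrow> override_on col g Vs y = override_on col g' Vs y"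
      unfolding override_on_def by auto
    then show "majority_at V adj (override_on col g Vs) x \<Longrightarrow> majority_at V adj (override_on col g' Vs) x"
      using majority_at_cong[where c = "override_on col g Vs" and c' = "override_on col g' Vs"] by blast
  qed auto
  moreover have "\<exists>g\<in>topspace ?T. \<forall>x\<in>F. g \<in> {g \<in> Pi\<^sub>E Vs L. majority_at V adj (override_on col g Vs) x}"
    if "finite F" "F \<subseteq> Vs" for F
    using finite_subset_majority_list_coloring[OF assms(1,2) that(2) assms(3) that(1) finite_nbhd L2]
    by auto
  ultimately have "\<exists>g\<in>topspace ?T. \<forall>x\<in>Vs. g \<in> {g \<in> Pi\<^sub>E Vs L. majority_at V adj (override_on col g Vs) x}"
    by (rule compact_space_INT_nonempty)
  then show ?thesis
    by auto
qed

section \<open>Line graphs\<close>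

definition incident_edges :: "'a set set \<Rightarrow> 'a \<Rightarrow> 'a set set" where
  "incident_edges E x = {e \<in> E. x \<in> e}"

lemma symp_line_adj: "symp (line_adj E)"
  by (auto simp: symp_def line_adj_def)

lemma irreflp_line_adj: "irreflp (line_adj E)"
  by (simp add: irreflp_def line_adj_def)

lemma nbhd_line_adj_subset: "nbhd E (line_adj E) e \<subseteq> (\<Union>x\<in>e. incident_edges E x)"
  by (auto simp: nbhd_def line_adj_def incident_edges_def)

lemma finite_of_simple_edges: "simple_edges E \<Longrightarrow> e \<in> E \<Longrightarrow> finite e"
  unfolding simple_edges_def by (metis card.infinite zero_neq_numeral)

lemma incident_edges_list_coloring:
  fixes E :: "'a set set" and L :: "'a set \<Rightarrow> 'c set"
  assumes "simple_edges E" and L2: "\<forall>e\<in>E. card (L e) = 2"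
  shows "\<exists>col. \<forall>x. infinite (incident_edges E x) \<longrightarrow>
    (\<forall>e\<in>incident_edges E x. col e \<in> L e) \<and>
    (\<forall>c. incident_edges E x \<lesssim> {f \<in> incident_edges E x. col f \<noteq> c})"
proof -
  let ?X = "{x. infinite (incident_edges E x)}"
  have "finite {x \<in> ?X. e \<in> incident_edges E x}" for e
    using finite_of_simple_edges[OF \<open>simple_edges E\<close>]
    by (cases "e \<in> E") (auto simp: incident_edges_def)
  moreover have "card (L e) = 2" if "e \<in> incident_edges E x" for x e
    using L2 that by (simp add: incident_edges_def)
  ultimately obtain col :: "'a set \<Rightarrow> 'c" where
    "\<forall>x\<in>?X. \<forall>e\<in>incident_edges E x. col e \<in> L e"
    "\<forall>x\<in>?X. \<forall>c. incident_edges E x \<lesssim> {f \<in> incident_edges E x. col f \<noteq> c}"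
    using locally_finite_family_list_coloring_lepoll[of ?X "incident_edges E" L] by blast
  then show ?thesis
    by blast
qed

lemma finite_incident_edges_majority_list_coloring:
  fixes E :: "'a set set" and L :: "'a set \<Rightarrow> 'c set" and col :: "'a set \<Rightarrow> 'c"
  assumes "simple_edges E" and L2: "\<forall>e\<in>E. card (L e) = 2"
    and Es_def: "Es = {e \<in> E. \<forall>x\<in>e. finite (incident_edges E x)}"
  shows "\<exists>g\<in>Pi\<^sub>E Es L. \<forall>e\<in>Es. majority_at E (line_adj E) (override_on col g Es) e"
proof (rule locally_finite_majority_list_coloring[OF symp_line_adj irreflp_line_adj])
  fix e assume "e \<in> Es"
  then show "finite (nbhd E (line_adj E) e)"
    using finite_of_simple_edges[OF \<open>simple_edges E\<close>] nbhd_line_adj_subset[of E e]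
    unfolding Es_def by (auto intro: finite_subset)
qed (use L2 in \<open>auto simp: Es_def\<close>)

lemma majority_at_line_adj_if_infinite_incident:
  assumes "e \<in> E" "card e = 2" "x \<in> e" "infinite (incident_edges E x)"
    and rich: "\<And>y a. infinite (incident_edges E y) \<Longrightarrow>
      incident_edges E y \<lesssim> {f \<in> incident_edges E y. c f \<noteq> a}"
  shows "majority_at E (line_adj E) c e"
proof -
  obtain z where "e = {x, z}"
    using \<open>card e = 2\<close> \<open>x \<in> e\<close> by (metis card_2_iff insert_commute insertE singletonD)
  then obtain y w where e: "e = {y, w}" and "incident_edges E w \<lesssim> incident_edges E y"
    by (metis insert_commute lepoll_total)
  moreover have "x = y \<or> x = w"
    using \<open>x \<in> e\<close> e by blast
  ultimately have "infinite (incident_edges E y)"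
    using \<open>infinite (incident_edges E x)\<close> by (metis infinite_le_lepoll lepoll_trans)
  have "{f \<in> nbhd E (line_adj E) e. c f = c e} \<lesssim> incident_edges E y \<union> incident_edges E w"
    using nbhd_line_adj_subset[of E e] e by (intro subset_imp_lepoll) auto
  also have "\<dots> \<lesssim> incident_edges E y"
    using Un_lepoll_infinite \<open>infinite (incident_edges E y)\<close> \<open>incident_edges E w \<lesssim> incident_edges E y\<close>
    by blast
  also have "\<dots> \<lesssim> {f \<in> incident_edges E y. c f \<noteq> c e}"
    using rich \<open>infinite (incident_edges E y)\<close> by blast
  also have "\<dots> \<lesssim> {f \<in> nbhd E (line_adj E) e. c f \<noteq> c e}"
    using \<open>e \<in> E\<close> e unfolding incident_edges_def nbhd_def line_adj_def
    by (intro subset_imp_lepoll) auto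
  finally show ?thesis
    unfolding majority_at_def card_leq_iff_lepoll .
qed

theorem mainTheorem4:
  fixes E :: "'a set set" and L :: "'a set \<Rightarrow> 'c set"
  assumes "simple_edges E"
    and "infinite E"
    and "\<forall>e\<in>E. card (L e) = 2"
  shows "\<exists>c. majority_list_coloring E (line_adj E) L c"
proof -
  define Es where "Es = {e \<in> E. \<forall>x\<in>e. finite (incident_edges E x)}"
  obtain col where col: "\<forall>x. infinite (incident_edges E x) \<longrightarrow>
      (\<forall>e\<in>incident_edges E x. col e \<in> L e) \<and>
      (\<forall>c. incident_edges E x \<lesssim> {f \<in> incident_edges E x. col f \<noteq> c})"
    using incident_edges_list_coloring[OF assms(1,3)] by blast
  obtain g where g: "g \<in> Pi\<^sub>E Es L"
    and g_majority: "\<forall>e\<in>Es. majority_at E (line_adj E) (override_on col g Es) e"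
    using finite_incident_edges_majority_list_coloring[OF assms(1,3) Es_def] by blast
  define c where "c = override_on col g Es"
  have "c f = col f" if "f \<in> incident_edges E y" "infinite (incident_edges E y)" for f y
    using that unfolding c_def Es_def incident_edges_def by (auto simp: override_on_def)
  then have c_big: "(\<forall>e\<in>incident_edges E y. c e \<in> L e) \<and>
      (\<forall>a. incident_edges E y \<lesssim> {f \<in> incident_edges E y. c f \<noteq> a})"
    if "infinite (incident_edges E y)" for y
    using col that by (simp cong: Collect_cong conj_cong)
  have "c e \<in> L e \<and> majority_at E (line_adj E) c e" if "e \<in> E" for e
  proof (cases "e \<in> Es")
    case True
    then show ?thesis
      using g g_majority unfolding c_def by auto
  next
    case False
    then obtain x where "x \<in> e" "infinite (incident_edges E x)"
      using \<open>e \<in> E\<close> unfolding Es_def by blast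
    then show ?thesis
      using majority_at_line_adj_if_infinite_incident[OF \<open>e \<in> E\<close>] c_big \<open>e \<in> E\<close> assms(1)
      unfolding simple_edges_def incident_edges_def by blast
  qed
  then show ?thesis
    unfolding majority_list_coloring_iff by blast
qed

end
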